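(* The transverse expansion exponent function $\lambda_*(x)=\limsup_{n\to\infty}\frac1n\log\mu_n(x)$ is Borel measurable on $X$, and is constant on the orbits of the holonomy pseudogroup $\mathcal{G}_{\mathcal{F}}$.
   Context: $M$ is a closed Riemannian manifold with a codimension-one $C^1$-foliation $\mathcal{F}$ with oriented normal bundle. Fix a finite regular foliation atlas of transversally orientation-preserving charts $\varphi_\alpha\colon U_\alpha\to(-1,1)^n\times(-1,1)$ with transverse coordinate spaces $X_\alpha=(-1,1)$, and $X$ their disjoint union; $P_\alpha(x)$ is the plaque with transverse coordinate $x$; the transition map $h_{\beta\alpha}$ sends $x$ to $y$ when $P_\alpha(x)\cap P_\beta(y)\ne\emptyset$. A plaque chain $\mathcal{P}$ of length $\|\mathcal{P}\|=k$ is a sequence of $k+1$ plaques with consecutive ones intersecting, with holonomy $h_{\mathcal{P}}$ the composition of the corresponding transition maps on its maximal connected domain $D_{\mathcal{P}}$. $\mathcal{G}_{\mathcal{F}}$ is the pseudogroup on $X$ generated by the transition maps; its orbit of $x$ is $\{h_{\mathcal{P}}(x): x\in D_{\mathcal{P}}\}$. $\mu_0(x)=1$, $\mu_n(x)=\sup\{h_{\mathcal{P}}'(x):x\in D_{\mathcal{P}},\|\mathcal{P}\|\le n\}$. *)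

theory Defs
  imports "HOL-Analysis.Analysis"
begin

text \<open>Foliation charts take values in (leaf coordinates) x (transverse coordinate).\<close>

definition leaf_cube :: "(real^'n) set" where
  "leaf_cube = {v. \<forall>i. \<bar>v$i\<bar> < 1}"

definition closed_leaf_cube :: "(real^'n) set" where
  "closed_leaf_cube = {v. \<forall>i. \<bar>v$i\<bar> \<le> 1}"

definition I1 :: "real set" where
  "I1 = {-1<..<1}"

definition C1_on :: "'b::real_normed_vector set \<Rightarrow> ('b \<Rightarrow> 'c::real_normed_vector) \<Rightarrow> bool" where
  "C1_on S f \<longleftrightarrow> (\<exists>D. (\<forall>v\<in>S. (f has_derivative blinfun_apply (D v)) (at v)) \<and> continuous_on S D)"

definition foliated_chart :: "'a topology \<Rightarrow> 'a set \<Rightarrow> ('a \<Rightarrow> (real^'n) \<times> real) \<Rightarrow> bool" where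
  "foliated_chart M W \<psi> \<longleftrightarrow> openin M W \<and> open (\<psi> ` W) \<and>
     homeomorphic_map (subtopology M W) (top_of_set (\<psi> ` W)) \<psi>"

text \<open>Coherence of two foliated charts for a codimension-one C^1 foliation with
  transversally orientation preserving changes of coordinates: the coordinate change is C^1
  and locally of the form (u,x) -> (g(u,x), h(x)) with h' > 0.\<close>
definition foliated_coherent ::
  "'a set \<Rightarrow> ('a \<Rightarrow> (real^'n) \<times> real) \<Rightarrow> 'a set \<Rightarrow> ('a \<Rightarrow> (real^'n) \<times> real) \<Rightarrow> bool" where
  "foliated_coherent Wa \<psi>a Wb \<psi>b \<longleftrightarrow>
     (let S = \<psi>a ` (Wa \<inter> Wb); \<tau> = (\<lambda>v. \<psi>b (inv_into Wa \<psi>a v)) in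
      C1_on S \<tau> \<and>
      (\<forall>v\<in>S. \<exists>V h. open V \<and> v \<in> V \<and>
          (\<forall>w\<in>S \<inter> V. snd (\<tau> w) = h (snd w)) \<and>
          (\<forall>w\<in>S \<inter> V. \<exists>d. (h has_real_derivative d) (at (snd w)) \<and> d > 0)))"

definition plaque :: "('i \<Rightarrow> 'a \<Rightarrow> (real^'n) \<times> real) \<Rightarrow> ('i \<Rightarrow> 'a set) \<Rightarrow> 'i \<Rightarrow> real \<Rightarrow> 'a set" where
  "plaque \<psi> U \<alpha> x = {p \<in> U \<alpha>. snd (\<psi> \<alpha> p) = x}"

text \<open>Closed plaques of the closure of U_alpha, inside the larger chart W_alpha.\<close>
definition closed_plaque :: "('i \<Rightarrow> 'a \<Rightarrow> (real^'n) \<times> real) \<Rightarrow> ('i \<Rightarrow> 'a set) \<Rightarrow> 'i \<Rightarrow> real \<Rightarrow> 'a set" where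
  "closed_plaque \<psi> W \<alpha> x = {p \<in> W \<alpha>. fst (\<psi> \<alpha> p) \<in> closed_leaf_cube \<and> snd (\<psi> \<alpha> p) = x}"

text \<open>Finite regular foliation atlas (Candel--Conlon, Def. 1.2.11): charts
  phi_alpha = psi_alpha|U_alpha : U_alpha -> (-1,1)^n x (-1,1), each U_alpha having compact
  closure inside the domain W_alpha of a foliated chart psi_alpha, all charts psi_alpha
  mutually coherent, and closed plaques meeting at most one closed plaque of another chart.\<close>
definition regular_foliation_atlas ::
  "'a topology \<Rightarrow> 'i set \<Rightarrow> ('i \<Rightarrow> 'a set) \<Rightarrow> ('i \<Rightarrow> 'a \<Rightarrow> (real^'n) \<times> real) \<Rightarrow> ('i \<Rightarrow> 'a set) \<Rightarrow> bool" where
  "regular_foliation_atlas M A W \<psi> U \<longleftrightarrow>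
     finite A \<and> A \<noteq> {} \<and>
     (\<forall>\<alpha>\<in>A. foliated_chart M (W \<alpha>) (\<psi> \<alpha>)) \<and>
     (\<forall>\<alpha>\<in>A. \<forall>\<beta>\<in>A. foliated_coherent (W \<alpha>) (\<psi> \<alpha>) (W \<beta>) (\<psi> \<beta>)) \<and>
     (\<forall>\<alpha>\<in>A. U \<alpha> \<subseteq> W \<alpha> \<and> \<psi> \<alpha> ` U \<alpha> = leaf_cube \<times> I1) \<and>
     (\<forall>\<alpha>\<in>A. compactin M (M closure_of U \<alpha>) \<and> M closure_of U \<alpha> \<subseteq> W \<alpha>) \<and>
     (\<Union>\<alpha>\<in>A. U \<alpha>) = topspace M \<and>
     (\<forall>\<alpha>\<in>A. \<forall>\<beta>\<in>A.
        M interior_of (M closure_of U \<alpha>) \<inter> M interior_of (M closure_of U \<beta>) \<noteq> {} \<longrightarrow>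
        (\<forall>x\<in>{-1..1}. \<forall>y\<in>{-1..1}. \<forall>y'\<in>{-1..1}.
            closed_plaque \<psi> W \<alpha> x \<inter> closed_plaque \<psi> W \<beta> y \<noteq> {} \<longrightarrow>
            closed_plaque \<psi> W \<alpha> x \<inter> closed_plaque \<psi> W \<beta> y' \<noteq> {} \<longrightarrow> y = y'))"

text \<open>Here pl is the plaque function: pl alpha x = P_alpha(x).\<close>

definition trans_dom :: "('i \<Rightarrow> real \<Rightarrow> 'a set) \<Rightarrow> 'i \<Rightarrow> 'i \<Rightarrow> real set" where
  "trans_dom pl \<alpha> \<beta> = {x \<in> I1. \<exists>y\<in>I1. pl \<alpha> x \<inter> pl \<beta> y \<noteq> {}}"

definition trans_map :: "('i \<Rightarrow> real \<Rightarrow> 'a set) \<Rightarrow> 'i \<Rightarrow> 'i \<Rightarrow> real \<Rightarrow> real" where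
  "trans_map pl \<alpha> \<beta> x = (THE y. y \<in> I1 \<and> pl \<alpha> x \<inter> pl \<beta> y \<noteq> {})"

fun hol_map :: "('i \<Rightarrow> real \<Rightarrow> 'a set) \<Rightarrow> 'i list \<Rightarrow> real \<Rightarrow> real" where
  "hol_map pl (\<alpha> # \<beta> # cs) = hol_map pl (\<beta> # cs) \<circ> trans_map pl \<alpha> \<beta>"
| "hol_map pl cs = id"

fun hol_dom :: "('i \<Rightarrow> real \<Rightarrow> 'a set) \<Rightarrow> 'i list \<Rightarrow> real set" where
  "hol_dom pl (\<alpha> # \<beta> # cs) = {x \<in> trans_dom pl \<alpha> \<beta>. trans_map pl \<alpha> \<beta> x \<in> hol_dom pl (\<beta> # cs)}"
| "hol_dom pl cs = I1"

text \<open>A plaque chain is a nonempty list of plaques (chart index, transverse coordinate),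
  consecutive ones intersecting; its length is (number of plaques) - 1.\<close>
definition plaque_chain :: "('i \<Rightarrow> real \<Rightarrow> 'a set) \<Rightarrow> 'i set \<Rightarrow> ('i \<times> real) list \<Rightarrow> bool" where
  "plaque_chain pl A P \<longleftrightarrow> P \<noteq> [] \<and> (\<forall>q\<in>set P. fst q \<in> A \<and> snd q \<in> I1) \<and>
     (\<forall>i. Suc i < length P \<longrightarrow> pl (fst (P!i)) (snd (P!i)) \<inter> pl (fst (P!Suc i)) (snd (P!Suc i)) \<noteq> {})"

definition chain_len :: "('i \<times> real) list \<Rightarrow> nat" where
  "chain_len P = length P - 1"

definition chain_hol :: "('i \<Rightarrow> real \<Rightarrow> 'a set) \<Rightarrow> ('i \<times> real) list \<Rightarrow> real \<Rightarrow> real" where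
  "chain_hol pl P = hol_map pl (map fst P)"

definition chain_dom :: "('i \<Rightarrow> real \<Rightarrow> 'a set) \<Rightarrow> ('i \<times> real) list \<Rightarrow> real set" where
  "chain_dom pl P = connected_component_set (hol_dom pl (map fst P)) (snd (hd P))"

text \<open>Points of X (disjoint union of the X_alpha) are pairs (alpha, x) with x in X_alpha.\<close>

definition orbit :: "('i \<Rightarrow> real \<Rightarrow> 'a set) \<Rightarrow> 'i set \<Rightarrow> 'i \<times> real \<Rightarrow> ('i \<times> real) set" where
  "orbit pl A p = {(fst (last P), chain_hol pl P (snd p)) | P.
      plaque_chain pl A P \<and> fst (hd P) = fst p \<and> snd p \<in> chain_dom pl P}"

definition mu :: "('i \<Rightarrow> real \<Rightarrow> 'a set) \<Rightarrow> 'i set \<Rightarrow> nat \<Rightarrow> 'i \<times> real \<Rightarrow> real" where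
  "mu pl A n p = (if n = 0 then 1 else
      Sup {deriv (chain_hol pl P) (snd p) | P.
             plaque_chain pl A P \<and> fst (hd P) = fst p \<and> snd p \<in> chain_dom pl P \<and> chain_len P \<le> n})"

definition lambda_star :: "('i \<Rightarrow> real \<Rightarrow> 'a set) \<Rightarrow> 'i set \<Rightarrow> 'i \<times> real \<Rightarrow> ereal" where
  "lambda_star pl A p = limsup (\<lambda>n. ereal (ln (mu pl A n p) / real n))"

end

theory Submission
  imports Defs
begin

text \<open>Measurability: each \<open>\<mu>\<^sub>n\<close> is the maximum of finitely many functions \<open>x \<mapsto> h\<^sub>P'(x)\<close>, one for
  every sequence of charts of length at most \<open>n + 1\<close> (only the charts of a plaque chain matter, and
  the derivative of a \<open>C\<^sup>1\<close> map on an open set is a pointwise limit of difference quotients), so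
  \<open>\<lambda>\<^sub>*\<close> is a limsup of Borel functions.
  Invariance: if \<open>y = h\<^sub>P(x)\<close> for a chain \<open>P\<close> of length \<open>k\<close>, concatenating \<open>P\<close> with chains
  starting at \<open>y\<close> gives \<open>\<mu>\<^sub>n(y) h\<^sub>P'(x) \<le> \<mu>\<^sub>n\<^sub>+\<^sub>k(x)\<close>; the constant factor and the shift by \<open>k\<close> disappear
  in \<open>limsup (1/n) log\<close>, and the reversed chain gives the other inequality.\<close>

lemma limsup_growth_rate_mono:
  fixes a b :: "nat \<Rightarrow> real"
  assumes ab: "\<And>n. b n + C \<le> a (n + k)"
  shows "limsup (\<lambda>n. ereal (b n / real n)) \<le> limsup (\<lambda>n. ereal (a n / real n))"
  unfolding Limsup_le_iff
proof (intro allI impI)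
  fix y assume y: "y > limsup (\<lambda>n. ereal (a n / real n))"
  show "\<forall>\<^sub>F n in sequentially. y > ereal (b n / real n)"
  proof (cases y)
    case (real w)
    obtain z where z: "limsup (\<lambda>n. ereal (a n / real n)) < ereal z" "z < w"
      using ereal_dense2[OF y] real by auto
    obtain N where N: "\<And>n. n \<ge> N \<Longrightarrow> a n / real n < z"
      using Limsup_lessD[OF z(1)] by (auto simp: eventually_sequentially)
    have "(\<lambda>n. z + (z * real k - C) * (1 / real n)) \<longlonglongrightarrow> z + (z * real k - C) * 0"
      by (intro tendsto_intros lim_inverse_n')
    then have "\<forall>\<^sub>F n in sequentially. z + (z * real k - C) * (1 / real n) < w"
      using z(2) by (auto elim: order_tendstoD)
    moreover have "\<forall>\<^sub>F n in sequentially. n \<ge> max N 1" by (rule eventually_ge_at_top)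
    ultimately show ?thesis
    proof eventually_elim
      case (elim n)
      then have n: "real n > 0" by auto
      have "a (n + k) < z * real (n + k)" using N[of "n + k"] elim by (simp add: divide_less_eq)
      then have "b n < z * real (n + k) - C" using ab[of n] by linarith
      also have "\<dots> = real n * (z + (z * real k - C) * (1 / real n))" using n by (simp add: field_simps)
      finally have "b n < real n * (z + (z * real k - C) * (1 / real n))" .
      then have "b n / real n < z + (z * real k - C) * (1 / real n)"
        using n by (simp add: divide_less_eq mult.commute)
      then show ?case using elim real by simp
    qed
  qed (use y in simp_all)
qed

lemma borel_measurable_deriv_on_open:
  fixes f :: "real \<Rightarrow> real"
  assumes E: "open E" and f: "\<And>x. x \<in> E \<Longrightarrow> f differentiable (at x)"
  shows "(\<lambda>x. if x \<in> E then deriv f x else c) \<in> borel_measurable borel"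
proof -
  have [measurable]: "E \<in> sets borel" using E by simp
  have "continuous_on E f"
    by (meson f continuous_at_imp_continuous_on differentiable_imp_continuous_within)
  define F where "F y = (if y \<in> E then f y else 0)" for y
  have [measurable]: "F \<in> borel_measurable borel"
    unfolding F_def using \<open>continuous_on E f\<close>
    by (intro borel_measurable_continuous_on_if continuous_on_const) simp_all
  define q where "q k x = (if x \<in> E then (F (x + 1 / Suc k) - F x) * Suc k else c)" for k :: nat and x
  have "(\<lambda>k. q k x) \<longlonglongrightarrow> (if x \<in> E then deriv f x else c)" for x
  proof (cases "x \<in> E")
    case True
    have "((\<lambda>y. (f y - f x) / (y - x)) \<longlongrightarrow> deriv f x) (at x)"
      using f[OF True] by (simp add: DERIV_deriv_iff_real_differentiable[symmetric] has_field_derivative_iff)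
    moreover have s: "(\<lambda>k. x + 1 / real (Suc k)) \<longlonglongrightarrow> x"
      using tendsto_add[OF tendsto_const LIMSEQ_Suc[OF lim_inverse_n']] by simp
    then have "filterlim (\<lambda>k. x + 1 / real (Suc k)) (at x) sequentially"
      by (auto simp: filterlim_at)
    ultimately have lim: "(\<lambda>k. (f (x + 1 / Suc k) - f x) / (x + 1 / Suc k - x)) \<longlonglongrightarrow> deriv f x"
      by (rule filterlim_compose)
    have "\<forall>\<^sub>F k in sequentially. x + 1 / real (Suc k) \<in> E"
      using topological_tendstoD[OF s E True] .
    then have "\<forall>\<^sub>F k in sequentially. (f (x + 1 / Suc k) - f x) / (x + 1 / Suc k - x) = q k x"
      by eventually_elim (simp add: q_def F_def True)
    with lim show ?thesis using True by (simp add: Lim_transform_eventually)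
  qed (simp add: q_def)
  moreover have "q k \<in> borel_measurable borel" for k unfolding q_def by measurable
  ultimately show ?thesis by (rule borel_measurable_LIMSEQ_real)
qed

lemma plaque_chain_Cons:
  assumes "plaque_chain pl A P" "a \<in> A" "x \<in> I1" "pl a x \<inter> pl (fst (hd P)) (snd (hd P)) \<noteq> {}"
  shows "plaque_chain pl A ((a, x) # P)"
  using assms unfolding plaque_chain_def by (auto simp: nth_Cons hd_conv_nth split: nat.split)

lemma hol_dom_subset_I1: "hol_dom pl cs \<subseteq> I1"
  by (induction cs rule: induct_list012) (auto simp: trans_dom_def)

lemma hol_map_append:
  assumes "cs \<noteq> []" "ds \<noteq> []" "last cs = hd ds"
  shows "hol_map pl (cs @ tl ds) = hol_map pl ds \<circ> hol_map pl cs"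
  using assms by (induction cs rule: induct_list012) (auto simp: list.collapse)

lemma hol_dom_append:
  assumes "cs \<noteq> []" "ds \<noteq> []" "last cs = hd ds"
  shows "hol_dom pl (cs @ tl ds) = {x \<in> hol_dom pl cs. hol_map pl cs x \<in> hol_dom pl ds}"
  using assms hol_dom_subset_I1[of pl ds]
  by (induction cs rule: induct_list012) (auto simp: list.collapse)

locale plaque_transitions =
  fixes pl :: "'i \<Rightarrow> real \<Rightarrow> 'a set" and A :: "'i set"
  assumes plaque_meets_unique: "\<And>a b x y y'. \<lbrakk>a \<in> A; b \<in> A; y \<in> I1; y' \<in> I1;
      pl a x \<inter> pl b y \<noteq> {}; pl a x \<inter> pl b y' \<noteq> {}\<rbrakk> \<Longrightarrow> y = y'"
begin

lemma trans_mapI: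
  assumes "a \<in> A" "b \<in> A" "x \<in> I1" "y \<in> I1" "pl a x \<inter> pl b y \<noteq> {}"
  shows "x \<in> trans_dom pl a b" and "trans_map pl a b x = y"
proof -
  show "x \<in> trans_dom pl a b" using assms unfolding trans_dom_def by auto
  show "trans_map pl a b x = y" unfolding trans_map_def
    by (rule the_equality) (use assms plaque_meets_unique[OF assms(1,2) _ assms(4)] in auto)
qed

lemma trans_map_meets:
  assumes "a \<in> A" "b \<in> A" "x \<in> trans_dom pl a b"
  shows "trans_map pl a b x \<in> I1" and "pl a x \<inter> pl b (trans_map pl a b x) \<noteq> {}"
proof -
  obtain y where "x \<in> I1" "y \<in> I1" "pl a x \<inter> pl b y \<noteq> {}"
    using assms(3) unfolding trans_dom_def by auto
  with trans_mapI[OF assms(1,2)]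
  show "trans_map pl a b x \<in> I1" "pl a x \<inter> pl b (trans_map pl a b x) \<noteq> {}" by auto
qed

lemma trans_map_inverse:
  assumes "a \<in> A" "b \<in> A" "x \<in> trans_dom pl a b"
  shows "trans_map pl a b x \<in> trans_dom pl b a" and "trans_map pl b a (trans_map pl a b x) = x"
proof -
  have "x \<in> I1" using assms(3) unfolding trans_dom_def by auto
  moreover have "pl b (trans_map pl a b x) \<inter> pl a x \<noteq> {}" using trans_map_meets[OF assms] by blast
  ultimately show "trans_map pl a b x \<in> trans_dom pl b a" "trans_map pl b a (trans_map pl a b x) = x"
    using trans_mapI[OF assms(2,1)] trans_map_meets(1)[OF assms] by auto
qed

lemma hol_map_in_I1: "\<lbrakk>set cs \<subseteq> A; x \<in> hol_dom pl cs\<rbrakk> \<Longrightarrow> hol_map pl cs x \<in> I1"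
  by (induction cs arbitrary: x rule: induct_list012) (auto simp: trans_map_meets)

lemma hol_map_rev:
  "\<lbrakk>set cs \<subseteq> A; x \<in> hol_dom pl cs\<rbrakk> \<Longrightarrow>
   hol_map pl cs x \<in> hol_dom pl (rev cs) \<and> hol_map pl (rev cs) (hol_map pl cs x) = x"
proof (induction cs arbitrary: x rule: induct_list012)
  case (3 a b cs)
  define y where "y = trans_map pl a b x"
  have ab: "a \<in> A" "b \<in> A" "x \<in> trans_dom pl a b" using "3.prems" by auto
  have y: "y \<in> hol_dom pl (b # cs)" using "3.prems" y_def by auto
  have "x \<in> I1" using ab(3) by (auto simp: trans_dom_def)
  then have "y \<in> hol_dom pl [b, a]" "hol_map pl [b, a] y = x"
    using trans_map_inverse[OF ab] y_def by auto
  moreover have "hol_map pl (b # cs) y \<in> hol_dom pl (rev (b # cs))"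
      "hol_map pl (rev (b # cs)) (hol_map pl (b # cs) y) = y"
    using "3.IH"(2)[OF _ y] "3.prems" by auto
  moreover have "rev (a # b # cs) = rev (b # cs) @ tl [b, a]" by simp
  ultimately show ?case
    using hol_map_append[of "rev (b # cs)" "[b, a]" pl] hol_dom_append[of "rev (b # cs)" "[b, a]" pl]
    by (simp add: y_def)
qed auto

lemma plaque_chain_of_charts:
  "\<lbrakk>set cs \<subseteq> A; cs \<noteq> []; x \<in> hol_dom pl cs\<rbrakk> \<Longrightarrow>
   \<exists>P. plaque_chain pl A P \<and> map fst P = cs \<and> snd (hd P) = x"
proof (induction cs arbitrary: x rule: induct_list012)
  case (2 a)
  then show ?case by (intro exI[of _ "[(a, x)]"]) (auto simp: plaque_chain_def)
next
  case (3 a b cs)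
  define y where "y = trans_map pl a b x"
  have ab: "a \<in> A" "b \<in> A" "x \<in> trans_dom pl a b" using "3.prems" by auto
  obtain P where P: "plaque_chain pl A P" "map fst P = b # cs" "snd (hd P) = y"
    using "3.IH"(2)[of y] "3.prems" y_def by auto
  have "fst (hd P) = b" "snd (hd P) = y" using P(2,3) by (cases P; auto)+
  then have "plaque_chain pl A ((a, x) # P)"
    using plaque_chain_Cons[OF P(1) ab(1)] ab(3) trans_map_meets[OF ab] y_def
    by (auto simp: trans_dom_def)
  then show ?case using P by (intro exI[of _ "(a, x) # P"]) auto
qed auto

end

locale holonomy_pseudogroup = plaque_transitions pl A
  for pl :: "'i \<Rightarrow> real \<Rightarrow> 'a set" and A :: "'i set" +
  assumes finite_charts: "finite A"
    and open_trans_dom: "\<And>a b. \<lbrakk>a \<in> A; b \<in> A\<rbrakk> \<Longrightarrow> open (trans_dom pl a b)"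
    and trans_map_has_pos_deriv: "\<And>a b x. \<lbrakk>a \<in> A; b \<in> A; x \<in> trans_dom pl a b\<rbrakk> \<Longrightarrow>
      \<exists>d>0. (trans_map pl a b has_real_derivative d) (at x)"
begin

lemma hol_map_has_pos_deriv:
  "\<lbrakk>set cs \<subseteq> A; x \<in> hol_dom pl cs\<rbrakk> \<Longrightarrow> \<exists>d>0. (hol_map pl cs has_real_derivative d) (at x)"
proof (induction cs arbitrary: x rule: induct_list012)
  case (3 a b cs)
  then have "a \<in> A" "b \<in> A" "x \<in> trans_dom pl a b" by auto
  then obtain d where d: "d > 0" "(trans_map pl a b has_real_derivative d) (at x)"
    using trans_map_has_pos_deriv by blast
  obtain e where e: "e > 0" "(hol_map pl (b # cs) has_real_derivative e) (at (trans_map pl a b x))"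
    using "3.IH"(2) "3.prems" by auto
  show ?case using DERIV_chain[OF e(2) d(2)] d(1) e(1) by (auto simp: o_def intro!: exI[of _ "e * d"])
qed (auto intro!: exI[of _ 1] simp: id_def)

lemma hol_map_differentiable:
  "\<lbrakk>set cs \<subseteq> A; x \<in> hol_dom pl cs\<rbrakk> \<Longrightarrow> hol_map pl cs differentiable (at x)"
  using hol_map_has_pos_deriv real_differentiable_def by blast

lemma open_hol_dom: "set cs \<subseteq> A \<Longrightarrow> open (hol_dom pl cs)"
proof (induction cs rule: induct_list012)
  case (3 a b cs)
  then have ab: "a \<in> A" "b \<in> A" by auto
  then have "continuous_on (trans_dom pl a b) (trans_map pl a b)"
    by (intro continuous_at_imp_continuous_on ballI) (metis DERIV_isCont trans_map_has_pos_deriv)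
  then have "open (trans_map pl a b -` hol_dom pl (b # cs) \<inter> trans_dom pl a b)"
    using continuous_on_open_vimage open_trans_dom[OF ab] "3.IH" "3.prems" by auto
  then show ?case by (simp add: Int_def Collect_conj_eq[symmetric] conj_commute)
qed (auto simp: I1_def)

text \<open>Off the domain the value 1 is harmless: the one-plaque chain contributes 1 to every \<open>\<mu>\<^sub>n\<close>.\<close>

definition hol_deriv :: "'i list \<Rightarrow> real \<Rightarrow> real" where
  "hol_deriv cs x = (if x \<in> hol_dom pl cs then deriv (hol_map pl cs) x else 1)"

definition chart_words :: "nat \<Rightarrow> 'i \<Rightarrow> 'i list set" where
  "chart_words n a = {cs. set cs \<subseteq> A \<and> cs \<noteq> [] \<and> hd cs = a \<and> length cs \<le> Suc n}"

lemma finite_chart_words: "finite (chart_words n a)"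
  unfolding chart_words_def
  by (rule finite_subset[OF _ finite_lists_length_le[OF finite_charts, of "Suc n"]]) auto

lemma chart_words_0: "a \<in> A \<Longrightarrow> chart_words 0 a = {[a]}"
  by (auto simp: chart_words_def neq_Nil_conv)

lemma singleton_in_chart_words: "a \<in> A \<Longrightarrow> [a] \<in> chart_words n a"
  by (simp add: chart_words_def)

lemma hol_deriv_singleton: "x \<in> I1 \<Longrightarrow> hol_deriv [a] x = 1"
  by (simp add: hol_deriv_def)

lemma has_hol_deriv:
  assumes "set cs \<subseteq> A" "x \<in> hol_dom pl cs"
  shows "hol_deriv cs x > 0" and "(hol_map pl cs has_real_derivative hol_deriv cs x) (at x)"
  using hol_map_has_pos_deriv[OF assms] assms(2) by (auto simp: hol_deriv_def DERIV_imp_deriv)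

lemma hol_deriv_append:
  assumes "set cs \<subseteq> A" "set ds \<subseteq> A" "cs \<noteq> []" "ds \<noteq> []" "last cs = hd ds"
    and x: "x \<in> hol_dom pl cs" and y: "hol_map pl cs x \<in> hol_dom pl ds"
  shows "x \<in> hol_dom pl (cs @ tl ds)"
    and "hol_deriv (cs @ tl ds) x = hol_deriv ds (hol_map pl cs x) * hol_deriv cs x"
proof -
  show x': "x \<in> hol_dom pl (cs @ tl ds)" using hol_dom_append[OF assms(3-5), of pl] x y by simp
  have "(hol_map pl ds \<circ> hol_map pl cs has_real_derivative
      hol_deriv ds (hol_map pl cs x) * hol_deriv cs x) (at x)"
    by (rule DERIV_chain has_hol_deriv assms)+
  then show "hol_deriv (cs @ tl ds) x = hol_deriv ds (hol_map pl cs x) * hol_deriv cs x"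
    using x' by (simp add: hol_deriv_def hol_map_append[OF assms(3-5), of pl] DERIV_imp_deriv)
qed

lemma deriv_chain_hol_eq_hol_deriv:
  assumes "plaque_chain pl A P" "fst (hd P) = a" "x \<in> chain_dom pl P" "chain_len P \<le> n"
  shows "map fst P \<in> chart_words n a" and "deriv (chain_hol pl P) x = hol_deriv (map fst P) x"
proof -
  have "P \<noteq> []" using assms(1) by (simp add: plaque_chain_def)
  then show "map fst P \<in> chart_words n a"
    using assms(1,2,4) unfolding chart_words_def plaque_chain_def chain_len_def by (auto simp: hd_map)
  have "x \<in> hol_dom pl (map fst P)"
    using assms(3) connected_component_subset unfolding chain_dom_def by blast
  then show "deriv (chain_hol pl P) x = hol_deriv (map fst P) x"
    by (simp add: hol_deriv_def chain_hol_def)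
qed

lemma hol_deriv_eq_deriv_chain_hol:
  assumes a: "a \<in> A" and x: "x \<in> I1" and cs: "cs \<in> chart_words n a"
  shows "\<exists>P. plaque_chain pl A P \<and> fst (hd P) = a \<and> x \<in> chain_dom pl P \<and> chain_len P \<le> n \<and>
             deriv (chain_hol pl P) x = hol_deriv cs x"
proof (cases "x \<in> hol_dom pl cs")
  case True
  obtain P where P: "plaque_chain pl A P" "map fst P = cs" "snd (hd P) = x"
    using plaque_chain_of_charts[OF _ _ True] cs unfolding chart_words_def by auto
  then have "P \<noteq> []" by (simp add: plaque_chain_def)
  then have "fst (hd P) = a" "chain_len P \<le> n"
    using cs P(2) unfolding chart_words_def chain_len_def by (auto simp: hd_map[symmetric])
  moreover have "x \<in> chain_dom pl P"
    using True P(2,3) by (simp add: chain_dom_def connected_component_refl)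
  ultimately show ?thesis using P True by (auto simp: hol_deriv_def chain_hol_def)
next
  case False
  then show ?thesis using a x
    by (intro exI[of _ "[(a, x)]"])
       (simp add: plaque_chain_def chain_dom_def connected_component_refl chain_len_def
         chain_hol_def hol_deriv_def)
qed

lemma mu_eq_Max:
  assumes "a \<in> A" "x \<in> I1"
  shows "mu pl A n (a, x) = Max ((\<lambda>cs. hol_deriv cs x) ` chart_words n a)"
proof (cases "n = 0")
  case True
  then show ?thesis using assms by (simp add: mu_def chart_words_0 hol_deriv_singleton)
next
  case False
  have "{deriv (chain_hol pl P) x | P.
      plaque_chain pl A P \<and> fst (hd P) = a \<and> x \<in> chain_dom pl P \<and> chain_len P \<le> n}
    = (\<lambda>cs. hol_deriv cs x) ` chart_words n a" (is "?S = ?T")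
  proof
    show "?S \<subseteq> ?T" using deriv_chain_hol_eq_hol_deriv by force
    show "?T \<subseteq> ?S" using hol_deriv_eq_deriv_chain_hol[OF assms] by force
  qed
  moreover have "chart_words n a \<noteq> {}" using singleton_in_chart_words[OF assms(1)] by blast
  ultimately show ?thesis using False by (simp add: mu_def finite_chart_words cSup_eq_Max)
qed

lemma hol_deriv_le_mu:
  "\<lbrakk>a \<in> A; x \<in> I1; cs \<in> chart_words n a\<rbrakk> \<Longrightarrow> hol_deriv cs x \<le> mu pl A n (a, x)"
  by (simp add: mu_eq_Max finite_chart_words)

lemma one_le_mu: "\<lbrakk>a \<in> A; x \<in> I1\<rbrakk> \<Longrightarrow> 1 \<le> mu pl A n (a, x)"
  using hol_deriv_le_mu singleton_in_chart_words hol_deriv_singleton by metis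

lemma mu_attained:
  assumes "a \<in> A" "x \<in> I1"
  obtains cs where "cs \<in> chart_words n a" "mu pl A n (a, x) = hol_deriv cs x"
proof -
  have "mu pl A n (a, x) \<in> (\<lambda>cs. hol_deriv cs x) ` chart_words n a"
    unfolding mu_eq_Max[OF assms] using finite_chart_words singleton_in_chart_words[OF assms(1)]
    by (intro Max_in) auto
  then show ?thesis using that by blast
qed

lemma mu_mult_hol_deriv_le:
  assumes cs: "set cs \<subseteq> A" "cs \<noteq> []" "hd cs = a" and x: "x \<in> hol_dom pl cs"
  shows "mu pl A n (last cs, hol_map pl cs x) * hol_deriv cs x \<le> mu pl A (n + (length cs - 1)) (a, x)"
proof -
  define k where "k = length cs - 1"
  define y where "y = hol_map pl cs x"
  have a: "a \<in> A" and x1: "x \<in> I1" and y1: "y \<in> I1"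
    using cs x hol_dom_subset_I1 hol_map_in_I1 by (auto simp: y_def)
  have "last cs \<in> A" using cs by auto
  then obtain ds where ds: "ds \<in> chart_words n (last cs)" "mu pl A n (last cs, y) = hol_deriv ds y"
    using mu_attained y1 by blast
  have cs_word: "cs \<in> chart_words (n + k) a" using cs by (auto simp: chart_words_def k_def)
  show ?thesis
  proof (cases "y \<in> hol_dom pl ds")
    case False
    then show ?thesis
      using ds(2) hol_deriv_le_mu[OF a x1 cs_word] by (simp add: hol_deriv_def y_def k_def)
  next
    case True
    have ds': "set ds \<subseteq> A" "ds \<noteq> []" "last cs = hd ds" using ds(1) by (auto simp: chart_words_def)
    have "cs @ tl ds \<in> chart_words (n + k) a"
      using cs ds(1) by (auto simp: chart_words_def k_def dest: list.set_sel(2))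
    then have "hol_deriv (cs @ tl ds) x \<le> mu pl A (n + k) (a, x)" by (rule hol_deriv_le_mu[OF a x1])
    then show ?thesis
      using hol_deriv_append(2)[OF cs(1) ds'(1) cs(2) ds'(2,3) x] True ds(2) by (simp add: y_def k_def)
  qed
qed

lemma lambda_star_hol_map_le:
  assumes cs: "set cs \<subseteq> A" "cs \<noteq> []" "hd cs = a" and x: "x \<in> hol_dom pl cs"
  shows "lambda_star pl A (last cs, hol_map pl cs x) \<le> lambda_star pl A (a, x)"
  unfolding lambda_star_def
proof (rule limsup_growth_rate_mono[where C = "ln (hol_deriv cs x)" and k = "length cs - 1"])
  fix n
  have "last cs \<in> A" "hol_map pl cs x \<in> I1" using cs x hol_map_in_I1 by auto
  then have mu_pos: "0 < mu pl A n (last cs, hol_map pl cs x)"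
    using one_le_mu less_le_trans zero_less_one by blast
  have deriv_pos: "0 < hol_deriv cs x" using has_hol_deriv(1)[OF cs(1) x] .
  have "ln (mu pl A n (last cs, hol_map pl cs x)) + ln (hol_deriv cs x)
      = ln (mu pl A n (last cs, hol_map pl cs x) * hol_deriv cs x)"
    using mu_pos deriv_pos by (simp add: ln_mult)
  also have "\<dots> \<le> ln (mu pl A (n + (length cs - 1)) (a, x))"
    using mu_mult_hol_deriv_le[OF assms, of n] mu_pos deriv_pos by (intro ln_mono) simp_all
  finally show "ln (mu pl A n (last cs, hol_map pl cs x)) + ln (hol_deriv cs x)
      \<le> ln (mu pl A (n + (length cs - 1)) (a, x))" .
qed

lemma lambda_star_orbit_invariant:
  assumes p: "p \<in> A \<times> I1" and q: "q \<in> orbit pl A p"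
  shows "lambda_star pl A q = lambda_star pl A p"
proof -
  obtain a x where ax: "p = (a, x)" using p by auto
  obtain P where P: "q = (fst (last P), chain_hol pl P x)" "plaque_chain pl A P" "fst (hd P) = a"
      "x \<in> chain_dom pl P"
    using q unfolding orbit_def ax by auto
  define cs where "cs = map fst P"
  have "P \<noteq> []" using P(2) by (simp add: plaque_chain_def)
  then have cs: "set cs \<subseteq> A" "cs \<noteq> []" "hd cs = a" and q_eq: "q = (last cs, hol_map pl cs x)"
    using P(1-3) by (auto simp: cs_def plaque_chain_def hd_map last_map chain_hol_def)
  have x: "x \<in> hol_dom pl cs"
    using P(4) connected_component_subset unfolding chain_dom_def cs_def by blast
  have rev_cs: "set (rev cs) \<subseteq> A" "rev cs \<noteq> []" "hd (rev cs) = last cs" "last (rev cs) = a"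
    using cs by (auto simp: hd_rev last_rev)
  show ?thesis
    using lambda_star_hol_map_le[OF cs x] lambda_star_hol_map_le[OF rev_cs(1-3)]
      hol_map_rev[OF cs(1) x] rev_cs(4)
    unfolding ax q_eq by (metis order_antisym)
qed

lemma borel_measurable_lambda_star:
  assumes a: "a \<in> A"
  shows "(\<lambda>x. lambda_star pl A (a, x)) \<in> borel_measurable (restrict_space borel I1)"
proof -
  define m where "m n x = Max ((\<lambda>cs. hol_deriv cs x) ` chart_words n a)" for n x
  have [measurable]: "m n \<in> borel_measurable borel" for n
    unfolding m_def hol_deriv_def using finite_chart_words
    by (intro borel_measurable_Max borel_measurable_deriv_on_open open_hol_dom hol_map_differentiable)
       (auto simp: chart_words_def)
  have "(\<lambda>x. limsup (\<lambda>n. ereal (ln (m n x) / real n))) \<in> borel_measurable borel"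
    by measurable
  then have "(\<lambda>x. limsup (\<lambda>n. ereal (ln (m n x) / real n))) \<in> borel_measurable (restrict_space borel I1)"
    by (rule measurable_restrict_space1)
  then show ?thesis
    by (rule measurable_cong[THEN iffD1, rotated])
       (simp add: space_restrict_space lambda_star_def m_def mu_eq_Max[OF a])
qed

end

lemma open_leaf_cube: "open (leaf_cube :: (real^'n) set)"
proof -
  have "leaf_cube = (\<Inter>i. {v :: real^'n. \<bar>v$i\<bar> < 1})" unfolding leaf_cube_def by auto
  moreover have "open (\<Inter>i. {v :: real^'n. \<bar>v$i\<bar> < 1})"
    by (intro open_INT ballI open_Collect_less continuous_intros) simp_all
  ultimately show ?thesis by simp
qed

context
  fixes M :: "'a topology" and A :: "'i set" and W U :: "'i \<Rightarrow> 'a set"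
    and \<psi> :: "'i \<Rightarrow> 'a \<Rightarrow> (real^'n) \<times> real"
  assumes atlas: "regular_foliation_atlas M A W \<psi> U"
begin

lemma chart_homeomorphism:
  assumes "a \<in> A"
  shows "openin M (W a)" and "homeomorphic_map (subtopology M (W a)) (top_of_set (\<psi> a ` W a)) (\<psi> a)"
    and "open (\<psi> a ` W a)"
  using atlas assms by (auto simp: regular_foliation_atlas_def foliated_chart_def)

lemma chart_box:
  assumes "a \<in> A"
  shows "U a \<subseteq> W a" and "\<psi> a ` U a = leaf_cube \<times> I1"
  using atlas assms by (auto simp: regular_foliation_atlas_def)

lemma atlas_coherent: "\<lbrakk>a \<in> A; b \<in> A\<rbrakk> \<Longrightarrow> foliated_coherent (W a) (\<psi> a) (W b) (\<psi> b)"
  using atlas unfolding regular_foliation_atlas_def by (elim conjE) simp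

lemma closed_plaques_meet_unique:
  assumes "a \<in> A" "b \<in> A" "M interior_of (M closure_of U a) \<inter> M interior_of (M closure_of U b) \<noteq> {}"
    and "x \<in> {-1..1}" "y \<in> {-1..1}" "y' \<in> {-1..1}"
    and "closed_plaque \<psi> W a x \<inter> closed_plaque \<psi> W b y \<noteq> {}"
    and "closed_plaque \<psi> W a x \<inter> closed_plaque \<psi> W b y' \<noteq> {}"
  shows "y = y'"
  using atlas assms unfolding regular_foliation_atlas_def by (elim conjE) meson

lemma inj_on_chart: "a \<in> A \<Longrightarrow> inj_on (\<psi> a) (W a)"
  by (metis chart_homeomorphism(1,2) homeomorphic_imp_injective_map openin_subset topspace_subtopology_subset)

lemma open_chart_image:
  assumes a: "a \<in> A" and V: "openin M V" "V \<subseteq> W a"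
  shows "open (\<psi> a ` V)"
proof -
  have "openin (subtopology M (W a)) V" using V by (simp add: openin_subtopology_alt, blast)
  then have "openin (top_of_set (\<psi> a ` W a)) (\<psi> a ` V)"
    using homeomorphic_map_openness[OF chart_homeomorphism(2)[OF a], of V] V(2)
      openin_subset[OF chart_homeomorphism(1)[OF a]] by (auto simp: topspace_subtopology_subset)
  then show ?thesis using chart_homeomorphism(3)[OF a] openin_open_trans by blast
qed

lemma openin_chart_box: "a \<in> A \<Longrightarrow> openin M (U a)"
proof -
  assume a: "a \<in> A"
  have "openin (top_of_set (\<psi> a ` W a)) (\<psi> a ` U a)"
    using chart_box[OF a] open_leaf_cube open_Times[of leaf_cube I1] open_subset
    by (metis I1_def image_mono open_greaterThanLessThan)
  then have "openin (subtopology M (W a)) (U a)"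
    using homeomorphic_map_openness[OF chart_homeomorphism(2)[OF a]] chart_box(1)[OF a]
      openin_subset[OF chart_homeomorphism(1)[OF a]] by (auto simp: topspace_subtopology_subset)
  then show "openin M (U a)" using openin_trans_full chart_homeomorphism(1)[OF a] by blast
qed

lemma plaque_coords:
  assumes "a \<in> A" "p \<in> plaque \<psi> U a x"
  shows "x \<in> I1" and "fst (\<psi> a p) \<in> leaf_cube"
proof -
  have "\<psi> a p \<in> leaf_cube \<times> I1" using chart_box(2)[OF assms(1)] assms(2) unfolding plaque_def by blast
  then show "x \<in> I1" "fst (\<psi> a p) \<in> leaf_cube" using assms(2) unfolding plaque_def by auto
qed

lemma plaque_subset_closed_plaque: "a \<in> A \<Longrightarrow> plaque \<psi> U a z \<subseteq> closed_plaque \<psi> W a z"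
  using chart_box(1) plaque_coords(2)
  by (fastforce simp: plaque_def closed_plaque_def leaf_cube_def closed_leaf_cube_def less_imp_le)

lemma plaque_transitions_plaques: "plaque_transitions (plaque \<psi> U) A"
proof
  fix a b x y y'
  assume a: "a \<in> A" and b: "b \<in> A" and y: "y \<in> I1" "y' \<in> I1"
    and meet: "plaque \<psi> U a x \<inter> plaque \<psi> U b y \<noteq> {}" "plaque \<psi> U a x \<inter> plaque \<psi> U b y' \<noteq> {}"
  obtain p where p: "p \<in> plaque \<psi> U a x" "p \<in> plaque \<psi> U b y" using meet(1) by auto
  have "U c \<subseteq> M interior_of (M closure_of U c)" if "c \<in> A" for c
    using openin_chart_box[OF that] by (simp add: interior_of_maximal closure_of_subset openin_subset)
  moreover have "p \<in> U a" "p \<in> U b" using p by (simp_all add: plaque_def)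
  ultimately have "M interior_of (M closure_of U a) \<inter> M interior_of (M closure_of U b) \<noteq> {}"
    using a b by blast
  moreover have "x \<in> {-1..1}" "y \<in> {-1..1}" "y' \<in> {-1..1}"
    using plaque_coords(1)[OF a p(1)] y by (auto simp: I1_def)
  moreover have "closed_plaque \<psi> W a x \<inter> closed_plaque \<psi> W b y \<noteq> {}"
    "closed_plaque \<psi> W a x \<inter> closed_plaque \<psi> W b y' \<noteq> {}"
    using meet plaque_subset_closed_plaque[OF a, of x] plaque_subset_closed_plaque[OF b] by blast+
  ultimately show "y = y'" by (rule closed_plaques_meet_unique[OF a b])
qed

interpretation plaque_transitions "plaque \<psi> U" A
  by (rule plaque_transitions_plaques)

text \<open>Coherence of the charts: near a point of \<open>P\<^sub>a(x) \<inter> P\<^sub>b(y)\<close>, the transverse coordinate of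
  \<open>\<psi>\<^sub>b \<circ> \<psi>\<^sub>a\<^sup>-\<^sup>1\<close> is a function \<open>h\<close> of the transverse coordinate alone, and \<open>h\<close> is the transition
  map on the plaques through \<open>\<psi>\<^sub>a\<^sup>-\<^sup>1(u, x')\<close> for \<open>x'\<close> near \<open>x\<close>.\<close>

lemma trans_map_locally:
  assumes a: "a \<in> A" and b: "b \<in> A" and x: "x \<in> trans_dom (plaque \<psi> U) a b"
  obtains e d h where "e > 0" "d > 0" "(h has_real_derivative d) (at x)"
    "\<And>x'. dist x' x < e \<Longrightarrow>
       x' \<in> trans_dom (plaque \<psi> U) a b \<and> trans_map (plaque \<psi> U) a b x' = h x'"
proof -
  obtain y p where p: "y \<in> I1" "p \<in> plaque \<psi> U a x" "p \<in> plaque \<psi> U b y"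
    using x by (auto simp: trans_dom_def)
  define u where "u = fst (\<psi> a p)"
  have p_coords: "\<psi> a p = (u, x)" "p \<in> U a" "p \<in> U b" using p(2,3) by (auto simp: u_def plaque_def)
  define S where "S = \<psi> a ` (W a \<inter> W b)"
  define \<tau> where "\<tau> = (\<lambda>v. \<psi> b (inv_into (W a) (\<psi> a) v))"
  have "(u, x) \<in> S"
    using p_coords chart_box(1)[OF a] chart_box(1)[OF b] unfolding S_def by (metis IntI image_eqI subsetD)
  moreover have "foliated_coherent (W a) (\<psi> a) (W b) (\<psi> b)" using atlas_coherent[OF a b] .
  ultimately obtain V h where Vh: "open V" "(u, x) \<in> V" "\<forall>w\<in>S \<inter> V. snd (\<tau> w) = h (snd w)"
      "\<forall>w\<in>S \<inter> V. \<exists>d. (h has_real_derivative d) (at (snd w)) \<and> d > 0"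
    unfolding foliated_coherent_def Let_def S_def[symmetric] \<tau>_def[symmetric] by blast
  obtain d where d: "(h has_real_derivative d) (at x)" "d > 0" using Vh(4) \<open>(u, x) \<in> S\<close> Vh(2) by force
  have "open (\<psi> a ` (U a \<inter> U b))"
    using openin_chart_box[OF a] openin_chart_box[OF b] chart_box(1)[OF a] by (intro open_chart_image[OF a]) auto
  moreover have "(u, x) \<in> \<psi> a ` (U a \<inter> U b)" using p_coords by (metis IntI image_eqI)
  ultimately obtain e where e: "e > 0" "ball (u, x) e \<subseteq> \<psi> a ` (U a \<inter> U b) \<inter> V"
    using open_contains_ball[THEN iffD1, OF open_Int] Vh(1,2) by blast
  have "x' \<in> trans_dom (plaque \<psi> U) a b \<and> trans_map (plaque \<psi> U) a b x' = h x'"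
    if x': "dist x' x < e" for x'
  proof -
    have "(u, x') \<in> \<psi> a ` (U a \<inter> U b) \<inter> V"
      by (rule subsetD[OF e(2)]) (use x' in \<open>simp add: dist_Pair_Pair dist_commute\<close>)
    then obtain p' where p': "p' \<in> U a" "p' \<in> U b" "\<psi> a p' = (u, x')" "(u, x') \<in> V" by auto
    have "p' \<in> W a" "p' \<in> W b" using p' chart_box(1)[OF a] chart_box(1)[OF b] by auto
    then have "(u, x') \<in> S" using p'(3) unfolding S_def by (metis IntI image_eqI)
    moreover have "inv_into (W a) (\<psi> a) (u, x') = p'"
      by (rule inv_into_f_eq[OF inj_on_chart[OF a] \<open>p' \<in> W a\<close> p'(3)])
    ultimately have "snd (\<psi> b p') = h x'" using Vh(3) p'(4) unfolding \<tau>_def by force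
    then have pb: "p' \<in> plaque \<psi> U b (h x')" and pa: "p' \<in> plaque \<psi> U a x'"
      using p' by (simp_all add: plaque_def)
    show ?thesis
      using trans_mapI[OF a b plaque_coords(1)[OF a pa] plaque_coords(1)[OF b pb]] pa pb by blast
  qed
  then show ?thesis using that e(1) d by blast
qed

lemma holonomy_pseudogroup_plaques: "holonomy_pseudogroup (plaque \<psi> U) A"
proof (intro holonomy_pseudogroup.intro holonomy_pseudogroup_axioms.intro)
  show "finite A" using atlas by (simp add: regular_foliation_atlas_def)
next
  fix a b x assume ab: "a \<in> A" "b \<in> A" and x: "x \<in> trans_dom (plaque \<psi> U) a b"
  obtain e d h where loc: "e > 0" "d > 0" "(h has_real_derivative d) (at x)"
      "\<And>x'. dist x' x < e \<Longrightarrow>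
        x' \<in> trans_dom (plaque \<psi> U) a b \<and> trans_map (plaque \<psi> U) a b x' = h x'"
    by (rule trans_map_locally[OF ab x], rule that)
  have eq: "h x' = trans_map (plaque \<psi> U) a b x'" if "x' \<in> ball x e" for x'
    using loc(4) that by (simp add: dist_commute)
  have "(trans_map (plaque \<psi> U) a b has_real_derivative d) (at x)"
    by (rule has_field_derivative_transform_within_open[OF loc(3) open_ball[of x e] _ eq])
      (simp add: loc(1))
  then show "\<exists>d>0. (trans_map (plaque \<psi> U) a b has_real_derivative d) (at x)" using loc(2) by blast
next
  fix a b assume ab: "a \<in> A" "b \<in> A"
  show "open (trans_dom (plaque \<psi> U) a b)"
    unfolding open_contains_ball
  proof
    fix x assume x: "x \<in> trans_dom (plaque \<psi> U) a b"
    obtain e d h where "e > 0" "\<And>x'. dist x' x < e \<Longrightarrow> x' \<in> trans_dom (plaque \<psi> U) a b"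
      by (rule trans_map_locally[OF ab x]) blast
    then show "\<exists>e>0. ball x e \<subseteq> trans_dom (plaque \<psi> U) a b" by (auto simp: dist_commute)
  qed
qed (rule plaque_transitions_plaques)

end

theorem lemma4p2:
  fixes M :: "'a topology" and A :: "'i set" and W U :: "'i \<Rightarrow> 'a set"
    and \<psi> :: "'i \<Rightarrow> 'a \<Rightarrow> (real^'n) \<times> real"
  assumes "compact_space M" and "Hausdorff_space M"
    and "regular_foliation_atlas M A W \<psi> U"
  shows "(\<forall>\<alpha>\<in>A. (\<lambda>x. lambda_star (plaque \<psi> U) A (\<alpha>, x)) \<in> borel_measurable (restrict_space borel I1))
       \<and> (\<forall>p\<in>A \<times> I1. \<forall>q\<in>orbit (plaque \<psi> U) A p.
            lambda_star (plaque \<psi> U) A q = lambda_star (plaque \<psi> U) A p)"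
proof -
  interpret holonomy_pseudogroup "plaque \<psi> U" A
    by (rule holonomy_pseudogroup_plaques[OF assms(3)])
  show ?thesis using borel_measurable_lambda_star lambda_star_orbit_invariant by blast
qed

end
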